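(* For every integer $n\ge 0$, $$\sum_{j,k}\genfrac{[}{]}{0pt}{}{n}{k}\genfrac{\{}{\}}{0pt}{}{k}{j}\binom{n}{j}(-1)^k=(-1)^n .$$
   Context: Here $\genfrac{[}{]}{0pt}{}{n}{k}$ denotes the unsigned (absolute) Stirling number of the first kind and $\genfrac{\{}{\}}{0pt}{}{n}{k}$ the ordinary Stirling number of the second kind (Knuth's notation), with $\genfrac{[}{]}{0pt}{}{0}{0}=\genfrac{\{}{\}}{0pt}{}{0}{0}=1$, $\genfrac{[}{]}{0pt}{}{n}{0}=\genfrac{\{}{\}}{0pt}{}{n}{0}=0$ for $n>0$, and $\genfrac{[}{]}{0pt}{}{n}{k}=\genfrac{\{}{\}}{0pt}{}{n}{k}=0$ for $0\le n<k$. The double sum is over all integers $j,k$ with $0\le j\le k\le n$. *)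

theory Defs
  imports "HOL-Combinatorics.Stirling"
begin

end

theory Submission
  imports Defs
begin

text \<open>Swapping the sums, the identity reduces to the orthogonality of the two kinds of Stirling
  numbers: the signed row sums \<open>\<Sum>k. (-1)^k [n,k] {k,j}\<close> vanish except for \<open>j = n\<close>, where
  they equal \<open>(-1)^n\<close>. Only the term \<open>j = n\<close> then survives, with
  \<open>n choose n = 1\<close>.\<close>

definition stirling_Stirling_alt_sum :: "nat \<Rightarrow> nat \<Rightarrow> int" where
  "stirling_Stirling_alt_sum n j = (\<Sum>k\<le>n. (-1)^k * int (stirling n k) * int (Stirling k j))"

lemma stirling_Stirling_alt_sum_shift:
  "(\<Sum>i\<le>n. (-1)^Suc i * int (stirling n (Suc i)) * int (Stirling (Suc i) j))
   = stirling_Stirling_alt_sum n j - int (stirling n 0) * int (Stirling 0 j)"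
proof -
  have "stirling_Stirling_alt_sum n j
      = (\<Sum>k\<le>Suc n. (-1)^k * int (stirling n k) * int (Stirling k j))"
    unfolding stirling_Stirling_alt_sum_def by (simp add: sum.atMost_Suc)
  also have "\<dots> = int (stirling n 0) * int (Stirling 0 j) +
      (\<Sum>i\<le>n. (-1)^Suc i * int (stirling n (Suc i)) * int (Stirling (Suc i) j))"
    by (subst sum.atMost_Suc_shift) simp
  finally show ?thesis by simp
qed

lemma stirling_Stirling_alt_sum_Suc_0: "stirling_Stirling_alt_sum (Suc n) 0 = 0"
  unfolding stirling_Stirling_alt_sum_def by (subst sum.atMost_Suc_shift) simp

lemma stirling_Stirling_alt_sum_Suc_Suc:
  "stirling_Stirling_alt_sum (Suc n) (Suc j)
     = (int n - int (Suc j)) * stirling_Stirling_alt_sum n (Suc j) - stirling_Stirling_alt_sum n j"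
proof -
  have "stirling_Stirling_alt_sum (Suc n) (Suc j)
      = (\<Sum>i\<le>n. (-1)^Suc i * int (stirling (Suc n) (Suc i)) * int (Stirling (Suc i) (Suc j)))"
    unfolding stirling_Stirling_alt_sum_def by (subst sum.atMost_Suc_shift) simp
  also have "\<dots> = int n *
        (\<Sum>i\<le>n. (-1)^Suc i * int (stirling n (Suc i)) * int (Stirling (Suc i) (Suc j)))
      - int (Suc j) * (\<Sum>i\<le>n. (-1)^i * int (stirling n i) * int (Stirling i (Suc j)))
      - (\<Sum>i\<le>n. (-1)^i * int (stirling n i) * int (Stirling i j))"
    unfolding sum_distrib_left sum_subtractf[symmetric]
    by (rule sum.cong) (simp_all add: algebra_simps)
  also have "\<dots> = (int n - int (Suc j)) * stirling_Stirling_alt_sum n (Suc j)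
      - stirling_Stirling_alt_sum n j"
    unfolding stirling_Stirling_alt_sum_shift stirling_Stirling_alt_sum_def[symmetric]
    by (simp add: algebra_simps)
  finally show ?thesis .
qed

theorem stirling_Stirling_orthogonality:
  "stirling_Stirling_alt_sum n j = (if j = n then (-1)^n else 0)"
proof (induction n arbitrary: j)
  case 0
  then show ?case by (cases j) (simp_all add: stirling_Stirling_alt_sum_def)
next
  case (Suc n)
  show ?case
  proof (cases j)
    case 0
    then show ?thesis by (simp add: stirling_Stirling_alt_sum_Suc_0)
  next
    case (Suc j')
    show ?thesis unfolding Suc stirling_Stirling_alt_sum_Suc_Suc Suc.IH by auto
  qed
qed

theorem mainTheorem2:
  fixes n :: nat
  shows "(\<Sum>k\<in>{0..n}. \<Sum>j\<in>{0..k}.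
            int (stirling n k) * int (Stirling k j) * int (n choose j) * (-1) ^ k) = (-1) ^ n"
proof -
  have "(\<Sum>k\<in>{0..n}. \<Sum>j\<in>{0..k}.
            int (stirling n k) * int (Stirling k j) * int (n choose j) * (-1) ^ k)
      = (\<Sum>k\<le>n. \<Sum>j\<le>n.
            int (stirling n k) * int (Stirling k j) * int (n choose j) * (-1) ^ k)"
    by (intro sum.cong sum.mono_neutral_left) auto
  also have "\<dots> = (\<Sum>j\<le>n. int (n choose j) * stirling_Stirling_alt_sum n j)"
    by (subst sum.swap)
      (simp add: stirling_Stirling_alt_sum_def sum_distrib_left algebra_simps)
  also have "\<dots> = (-1)^n"
    by (simp add: stirling_Stirling_orthogonality if_distrib[of "\<lambda>x. _ * x"] cong: if_cong)
  finally show ?thesis .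
qed

end
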